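(* Let $\alpha_H$ be the harmonic partition and let $\mathcal L^{(\alpha_H)}_n$ and $\mathcal L_n$ be the sum-level sets of the alternating and the classical Lüroth maps, as in the context. Then \[\lim_{n\to\infty}\lambda(\mathcal L^{(\alpha_H)}_n)=\lim_{n\to\infty}\lambda(\mathcal L_n)=0.\]
   Context: $\lambda$ is Lebesgue measure on $\mathcal U=[0,1]$. The harmonic partition $\alpha_H=\{A_n\}$ has $A_n=(1/(n+1),1/n]$, so $a_n=1/(n(n+1))$, $t_n=1/n$. The alternating Lüroth map is $L_{\alpha_H}(x)=-n(n+1)x+(n+1)$ for $x\in A_n$, $L_{\alpha_H}(0)=0$; its cylinders are $C(\ell_1,\dots,\ell_k)=\{x: L_{\alpha_H}^{i-1}(x)\in A_{\ell_i},\ i=1,\dots,k\}$ and $\mathcal L^{(\alpha_H)}_n$ is the union of all $C(\ell_1,\dots,\ell_k)$, $k\in\mathbb N$, with $\sum_i\ell_i=n$. The classical Lüroth map is $L(x)=n(n+1)x-n$ for $x\in[1/(n+1),1/n)$, $n\ge2$, $L(x)=2x-1$ for $x\in[1/2,1]$, $L(0)=0$; with digit intervals $B_1=[1/2,1]$, $B_n=[1/(n+1),1/n)$ for $n\ge2$, its cylinders are $\{x:L^{i-1}(x)\in B_{\ell_i},\ i=1,\dots,k\}$ and $\mathcal L_n$ is the union of those cylinders with $\sum_i\ell_i=n$. *)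

theory Defs
  imports "HOL-Analysis.Analysis"
begin

definition harmA :: "nat \<Rightarrow> real set" where
  "harmA n = {1 / real (n + 1) <.. 1 / real n}"

definition altL :: "real \<Rightarrow> real" where
  "altL x = (if x = 0 then 0 else
     (let n = (THE n. n \<ge> 1 \<and> x \<in> harmA n)
      in - (real n * real (n + 1)) * x + real (n + 1)))"

definition lurB :: "nat \<Rightarrow> real set" where
  "lurB n = (if n = 1 then {1/2 .. 1} else {1 / real (n + 1) ..< 1 / real n})"

definition lurL :: "real \<Rightarrow> real" where
  "lurL x = (if x = 0 then 0 else
     (let n = (THE n. n \<ge> 1 \<and> x \<in> lurB n)
      in if n = 1 then 2 * x - 1 else real n * real (n + 1) * x - real n))"

definition cyl :: "(real \<Rightarrow> real) \<Rightarrow> (nat \<Rightarrow> real set) \<Rightarrow> nat list \<Rightarrow> real set" where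
  "cyl T D ls = {x \<in> {0..1}. \<forall>i < length ls. (T ^^ i) x \<in> D (ls ! i)}"

definition sumlevel :: "(real \<Rightarrow> real) \<Rightarrow> (nat \<Rightarrow> real set) \<Rightarrow> nat \<Rightarrow> real set" where
  "sumlevel T D n = (\<Union>ls \<in> {ls. ls \<noteq> [] \<and> (\<forall>l \<in> set ls. l \<ge> 1) \<and> sum_list ls = n}. cyl T D ls)"

end

theory Submission
  imports Defs
begin

text \<open>On the digit interval of \<open>l\<close> both maps are inverted by an affine map of slope
  \<open>\<plusminus>p l\<close>, where \<open>p l = 1/(l(l+1))\<close>. Hence the cylinder of a digit word \<open>ls\<close> lies in an
  interval of length \<open>\<Prod>l\<leftarrow>ls. p l\<close>, and the \<open>n\<close>-th sum-level set has measure at most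
  \<open>u n\<close>, the sum of these products over all compositions \<open>ls\<close> of \<open>n\<close>. Now \<open>u\<close> is the
  renewal sequence of the step law \<open>p\<close>, whose mean \<open>\<Sum>l. 1/(l+1)\<close> is infinite, so \<open>u n\<close>
  tends to \<open>0\<close> by the renewal theorem. With the tails
  \<open>r j = 1/(j+1)\<close> one has \<open>\<Sum>j\<le>n. u j * r (n - j) = 1\<close>, so \<open>u\<close> cannot have long runs of
  values near a positive \<open>L = lim sup u\<close>; but since \<open>p 1 = 1/2\<close>, a value of \<open>u\<close> near \<open>L\<close>
  forces its predecessor to be near \<open>L\<close> as well, which produces such runs.\<close>

subsection \<open>A renewal theorem for the step law \<open>1/(l(l+1))\<close>\<close>

definition digit_length :: "nat \<Rightarrow> real" where
  "digit_length l = 1 / (real l * real (l + 1))"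

text \<open>The tail sum \<open>\<Sum>l>j. digit_length l\<close>, by telescoping.\<close>
definition digit_tail :: "nat \<Rightarrow> real" where
  "digit_tail j = inverse (real (Suc j))"

lemma digit_length_telescoping: "1 \<le> l \<Longrightarrow> digit_length l = 1 / real l - 1 / real (l + 1)"
  by (simp add: digit_length_def diff_frac_eq)

lemma digit_length_nonneg: "0 \<le> digit_length l"
  by (simp add: digit_length_def)

lemma digit_tail_nonneg: "0 \<le> digit_tail j"
  by (simp add: digit_tail_def)

lemma digit_tail_Suc: "digit_tail (Suc j) = digit_tail j - digit_length (Suc j)"
  by (simp add: digit_tail_def digit_length_telescoping inverse_eq_divide)

lemma sum_digit_length_reversed:
  "t \<le> m \<Longrightarrow> (\<Sum>j<t. digit_length (m - j)) = digit_tail (m - t) - digit_tail m"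
proof (induction t)
  case (Suc t)
  then have "m - t = Suc (m - Suc t)" by simp
  with Suc show ?case by (simp add: digit_tail_Suc)
qed simp

lemma sum_digit_tail_eq_harm: "(\<Sum>k<K. digit_tail k) = harm K"
  by (simp add: digit_tail_def harm_altdef)

lemma bounded_seq_limsupE:
  fixes w :: "nat \<Rightarrow> real"
  assumes nonneg: "\<And>n. 0 \<le> w n" and bdd: "bdd_above (range w)"
  obtains L where "0 \<le> L"
    and "\<And>d. 0 < d \<Longrightarrow> \<exists>N. \<forall>j\<ge>N. w j \<le> L + d"
    and "\<And>d N. 0 < d \<Longrightarrow> \<exists>n\<ge>N. L - d < w n"
proof
  define M where "M N = Sup (w ` {N..})" for N
  have bdd_tail: "bdd_above (w ` {N..})" for N
    using bdd by (rule bdd_above_mono) auto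
  have w_le_M: "w j \<le> M N" if "N \<le> j" for j N
    unfolding M_def using that by (intro cSup_upper bdd_tail) auto
  have M_nonneg: "0 \<le> M N" for N
    using w_le_M[of N N] nonneg[of N] by simp
  define L where "L = Inf (range M)"
  have bdd_M: "bdd_below (range M)"
    using M_nonneg by (intro bdd_belowI[where m=0]) auto
  show "0 \<le> L"
    unfolding L_def by (rule cInf_greatest) (auto simp: M_nonneg)
  show "\<exists>N. \<forall>j\<ge>N. w j \<le> L + d" if "0 < d" for d
  proof -
    have "\<exists>N. M N < L + d"
      using cInf_lessD[of "range M" "L + d"] that unfolding L_def by auto
    then show ?thesis
      using w_le_M by (meson less_imp_le order_trans)
  qed
  show "\<exists>n\<ge>N. L - d < w n" if "0 < d" for d N
  proof -
    have "L \<le> M N"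
      unfolding L_def by (rule cInf_lower) (auto simp: bdd_M)
    then have "L - d < Sup (w ` {N..})"
      using that unfolding M_def by simp
    then show ?thesis
      using less_cSupD[of "w ` {N..}"] by fastforce
  qed
qed

locale digit_renewal =
  fixes w :: "nat \<Rightarrow> real"
  assumes nonneg: "0 \<le> w n"
    and start: "w 0 = 1"
    and step: "w (Suc m) = (\<Sum>j\<le>m. digit_length (Suc m - j) * w j)"
begin

lemma convolution_with_tail: "(\<Sum>j\<le>n. w j * digit_tail (n - j)) = 1"
proof (induction n)
  case 0
  show ?case by (simp add: start digit_tail_def)
next
  case (Suc n)
  have tail: "digit_tail (Suc n - j) = digit_tail (n - j) - digit_length (Suc n - j)"
    if "j \<le> n" for j
    using that digit_tail_Suc[of "n - j"] by (simp add: Suc_diff_le)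
  have "(\<Sum>j\<le>Suc n. w j * digit_tail (Suc n - j))
      = (\<Sum>j\<le>n. w j * digit_tail (Suc n - j)) + w (Suc n)"
    by (simp add: digit_tail_def)
  also have "(\<Sum>j\<le>n. w j * digit_tail (Suc n - j))
      = (\<Sum>j\<le>n. w j * digit_tail (n - j) - digit_length (Suc n - j) * w j)"
    by (intro sum.cong) (auto simp: tail algebra_simps)
  also have "(\<Sum>j\<le>n. w j * digit_tail (n - j) - digit_length (Suc n - j) * w j) + w (Suc n) = 1"
    unfolding sum_subtractf Suc step[of n] by simp
  finally show ?case .
qed

lemma le_one: "w n \<le> 1"
proof -
  have "w n * digit_tail (n - n) \<le> (\<Sum>j\<le>n. w j * digit_tail (n - j))"
    by (rule member_le_sum) (auto intro: mult_nonneg_nonneg nonneg digit_tail_nonneg)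
  then show ?thesis
    using convolution_with_tail[of n] by (simp add: digit_tail_def)
qed

text \<open>In the renewal equation for \<open>w (Suc m)\<close> the step \<open>1\<close> has weight \<open>1/2\<close>, the steps
  of length at least \<open>N1\<close> have total weight at most \<open>digit_tail N1\<close>, and all other steps
  start from indices \<open>j \<ge> N0\<close>.\<close>
lemma step_bound:
  assumes L: "0 \<le> L + d" and above: "\<forall>j\<ge>N0. w j \<le> L + d"
    and N1: "1 \<le> N1" "N0 + N1 \<le> Suc m"
  shows "w (Suc m) \<le> w m / 2 + digit_tail N1 + (L + d) / 2"
proof -
  define t where "t = Suc m - N1"
  have t: "t \<le> m" "N0 \<le> t" "Suc m - t = N1"
    using N1 unfolding t_def by auto
  let ?p = "\<lambda>j. digit_length (Suc m - j)"
  have "w (Suc m) = ?p m * w m + (\<Sum>j<t. ?p j * w j) + (\<Sum>j\<in>{t..<m}. ?p j * w j)"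
    using t by (simp add: step lessThan_Suc_atMost[symmetric] lessThan_atLeast0
        sum.atLeastLessThan_concat)
  also have "(\<Sum>j<t. ?p j * w j) \<le> (\<Sum>j<t. ?p j)"
    by (intro sum_mono mult_right_le_one_le digit_length_nonneg nonneg le_one)
  also have "\<dots> \<le> digit_tail N1"
    using sum_digit_length_reversed[of t "Suc m"] t digit_tail_nonneg[of "Suc m"] by simp
  also have "(\<Sum>j\<in>{t..<m}. ?p j * w j) \<le> (\<Sum>j\<in>{t..<m}. ?p j * (L + d))"
    using above t by (intro sum_mono mult_left_mono) (auto intro: digit_length_nonneg)
  also have "\<dots> \<le> (\<Sum>j<m. ?p j * (L + d))"
    using L by (intro sum_mono2) (auto intro: mult_nonneg_nonneg digit_length_nonneg)
  also have "\<dots> = (L + d) * (digit_tail 1 - digit_tail (Suc m))"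
    using sum_digit_length_reversed[of m "Suc m"]
    by (simp only: sum_distrib_right[symmetric]) (simp add: mult.commute)
  also have "\<dots> \<le> (L + d) / 2"
    using L by (simp add: digit_tail_def mult_left_le field_simps)
  finally show ?thesis
    by (simp add: digit_length_def)
qed

lemma long_runs_near_limsup:
  assumes L: "0 \<le> L"
    and above: "\<And>d. 0 < d \<Longrightarrow> \<exists>N. \<forall>j\<ge>N. w j \<le> L + d"
    and near: "\<And>d N. 0 < d \<Longrightarrow> \<exists>n\<ge>N. L - d < w n"
    and e: "0 < e"
  shows "\<exists>n\<ge>N + K. \<forall>k\<le>K. L - e \<le> w (n - k)"
  using e
proof (induction K arbitrary: e N)
  case 0
  then obtain n where "N \<le> n" "L - e < w n" using near by blast
  then show ?case by auto
next
  case (Suc K)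
  define d where "d = e / 8"
  have d: "0 < d" using Suc.prems by (simp add: d_def)
  obtain N0 where N0: "\<forall>j\<ge>N0. w j \<le> L + d" using above[OF d] by blast
  have "\<forall>\<^sub>F N1 in sequentially. digit_tail N1 < e / 4"
    using order_tendstoD(2)[OF LIMSEQ_inverse_real_of_nat, of "e / 4"] Suc.prems
    unfolding digit_tail_def by simp
  then have "\<forall>\<^sub>F N1 in sequentially. 1 \<le> N1 \<and> digit_tail N1 < e / 4"
    by (intro eventually_conj eventually_ge_at_top)
  then obtain N1 where N1: "1 \<le> N1" "digit_tail N1 < e / 4"
    using eventually_sequentially by auto
  obtain n where n: "N + N0 + N1 + K \<le> n" and run: "\<forall>k\<le>K. L - d \<le> w (n - k)"
    using Suc.IH[OF d, of "N + N0 + N1"] by auto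
  have "n - K = Suc (n - Suc K)" using n N1 by simp
  then have "w (n - K) \<le> w (n - Suc K) / 2 + digit_tail N1 + (L + d) / 2"
    using step_bound[of L d N0 N1 "n - Suc K"] L d N0 N1 n by simp
  moreover have "L - d \<le> w (n - K)" using run by simp
  ultimately have "L - e \<le> w (n - Suc K)"
    using N1 Suc.prems unfolding d_def by argo
  moreover have "L - e \<le> w (n - k)" if "k \<le> K" for k
  proof -
    have "L - d \<le> w (n - k)" using run that by blast
    then show ?thesis using Suc.prems unfolding d_def by linarith
  qed
  ultimately have "\<forall>k\<le>Suc K. L - e \<le> w (n - k)"
    by (metis le_Suc_eq)
  then show ?case
    using n N1(1) by (intro exI[of _ n]) auto
qed

text \<open>A run of \<open>K\<close> values near \<open>L\<close> forces the convolution with the tails to exceed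
  \<open>L/2 \<cdot> harm K\<close>, which is unbounded: this is where the infinite mean \<open>\<Sum>l. l \<cdot>
  digit_length l\<close> enters.\<close>
lemma limsup_nonpos:
  assumes runs: "\<And>e K. 0 < e \<Longrightarrow> \<exists>n\<ge>K. \<forall>k\<le>K. L - e \<le> w (n - k)"
  shows "L \<le> 0"
proof (rule ccontr)
  assume "\<not> L \<le> 0"
  then have L: "0 < L" by simp
  obtain K where K: "2 / L < harm K"
    using filterlim_at_top_dense[THEN iffD1, OF harm_at_top, rule_format, of "2 / L"]
      eventually_sequentially by auto
  obtain n where n: "K \<le> n" and run: "\<forall>k\<le>K. L / 2 \<le> w (n - k)"
    using runs[of "L / 2" K] L by auto
  have "L / 2 * harm K = (\<Sum>k<K. L / 2 * digit_tail k)"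
    by (simp add: sum_digit_tail_eq_harm[symmetric] sum_distrib_left)
  also have "\<dots> \<le> (\<Sum>k<K. w (n - k) * digit_tail k)"
    using run by (intro sum_mono mult_right_mono) (auto simp: digit_tail_nonneg)
  also have "\<dots> \<le> (\<Sum>k\<le>n. w (n - k) * digit_tail k)"
    using n by (intro sum_mono2) (auto intro: mult_nonneg_nonneg nonneg digit_tail_nonneg)
  also have "\<dots> = (\<Sum>j\<le>n. w j * digit_tail (n - j))"
    by (rule sum.reindex_bij_witness[where i="\<lambda>j. n - j" and j="\<lambda>j. n - j"]) auto
  also have "\<dots> = 1" by (rule convolution_with_tail)
  finally have "L / 2 * harm K \<le> 1" .
  moreover have "L / 2 * (2 / L) < L / 2 * harm K"
    using K L by (intro mult_strict_left_mono) auto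
  ultimately show False using L by simp
qed

theorem tendsto_zero: "w \<longlonglongrightarrow> 0"
proof -
  obtain L where L: "0 \<le> L"
    and above: "\<And>d. 0 < d \<Longrightarrow> \<exists>N. \<forall>j\<ge>N. w j \<le> L + d"
    and near: "\<And>d N. 0 < d \<Longrightarrow> \<exists>n\<ge>N. L - d < w n"
    by (rule bounded_seq_limsupE[of w, OF nonneg bdd_aboveI2[OF le_one]]) (rule that)
  have "L \<le> 0"
    using long_runs_near_limsup[OF L above near, of _ 0] by (intro limsup_nonpos) auto
  show ?thesis
  proof (rule LIMSEQ_I)
    fix r :: real
    assume "0 < r"
    then obtain N where "\<forall>j\<ge>N. w j \<le> L + r / 2" using above[of "r / 2"] by auto
    moreover have "norm (w n - 0) < r" if "w n \<le> L + r / 2" for n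
      using that \<open>L \<le> 0\<close> \<open>0 < r\<close> nonneg[of n] by simp
    ultimately show "\<exists>N. \<forall>n\<ge>N. norm (w n - 0) < r"
      by blast
  qed
qed

end

definition compositions :: "nat \<Rightarrow> nat list set" where
  "compositions n = {ls. (\<forall>l\<in>set ls. 1 \<le> l) \<and> sum_list ls = n}"

text \<open>The probability that the renewal process with step law \<open>digit_length\<close> visits \<open>n\<close>.\<close>
definition visit_prob :: "nat \<Rightarrow> real" where
  "visit_prob n = (\<Sum>ls\<in>compositions n. prod_list (map digit_length ls))"

lemma finite_compositions: "finite (compositions n)"
proof (rule finite_subset)
  have "length ls \<le> sum_list ls" if "\<forall>l\<in>set ls. 1 \<le> l" for ls :: "nat list"
    using that by (induction ls) auto
  then show "compositions n \<subseteq> {ls. set ls \<subseteq> {0..n} \<and> length ls \<le> n}"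
    unfolding compositions_def using member_le_sum_list by fastforce
  show "finite {ls. set ls \<subseteq> {0..n} \<and> length ls \<le> n}"
    by (rule finite_lists_length_le) simp
qed

lemma compositions_0: "compositions 0 = {[]}"
proof -
  have "ls = []" if "\<forall>l\<in>set ls. 1 \<le> l" "sum_list ls = 0" for ls :: "nat list"
    using that by (cases ls) auto
  then show ?thesis
    unfolding compositions_def by auto
qed

lemma compositions_Suc:
  "compositions (Suc m) = (\<Union>j\<le>m. (#) (Suc m - j) ` compositions j)"
proof (intro equalityI subsetI)
  fix ls
  assume "ls \<in> compositions (Suc m)"
  then obtain l ls' where ls: "ls = l # ls'" "1 \<le> l" "\<forall>l\<in>set ls'. 1 \<le> l"
    and sum: "l + sum_list ls' = Suc m"
    unfolding compositions_def by (cases ls) auto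
  then have "ls' \<in> compositions (sum_list ls')" "sum_list ls' \<le> m"
    unfolding compositions_def by auto
  with ls sum show "ls \<in> (\<Union>j\<le>m. (#) (Suc m - j) ` compositions j)"
    by (intro UN_I[of "sum_list ls'"]) auto
qed (auto simp: compositions_def)

lemma visit_prob_digit_renewal: "digit_renewal visit_prob"
proof
  show "0 \<le> visit_prob n" for n
    unfolding visit_prob_def
    by (intro sum_nonneg prod_list_nonneg) (auto simp: digit_length_nonneg)
  show "visit_prob 0 = 1"
    by (simp add: visit_prob_def compositions_0)
  show "visit_prob (Suc m) = (\<Sum>j\<le>m. digit_length (Suc m - j) * visit_prob j)" for m
  proof -
    have "visit_prob (Suc m)
        = (\<Sum>j\<le>m. \<Sum>ls\<in>(#) (Suc m - j) ` compositions j. prod_list (map digit_length ls))"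
      unfolding visit_prob_def compositions_Suc
      by (rule sum.UNION_disjoint) (auto simp: finite_compositions)
    also have "\<dots> = (\<Sum>j\<le>m. \<Sum>ls\<in>compositions j. digit_length (Suc m - j) * prod_list (map digit_length ls))"
      by (simp add: sum.reindex)
    finally show ?thesis
      by (simp add: visit_prob_def sum_distrib_left)
  qed
qed

subsection \<open>Cylinders of maps with affine inverse branches\<close>

text \<open>The only properties of the two Lueroth maps that the argument uses.\<close>
definition lueroth_like :: "(real \<Rightarrow> real) \<Rightarrow> (nat \<Rightarrow> real set) \<Rightarrow> bool" where
  "lueroth_like T D \<longleftrightarrow> (\<forall>l\<ge>1. D l \<subseteq> {1 / real (l + 1) .. 1 / real l} \<and>
     (\<exists>a \<sigma>. \<bar>\<sigma>\<bar> = digit_length l \<and> (\<forall>x\<in>D l. x = a + \<sigma> * T x)))"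

lemma affine_image_interval:
  fixes a \<sigma> c w :: real
  assumes "0 \<le> w"
  shows "\<exists>c'. \<forall>y\<in>{c .. c + w}. a + \<sigma> * y \<in> {c' .. c' + \<bar>\<sigma>\<bar> * w}"
proof (cases "0 \<le> \<sigma>")
  case True
  have "\<sigma> * c \<le> \<sigma> * y \<and> \<sigma> * y \<le> \<sigma> * c + \<sigma> * w" if "y \<in> {c .. c + w}" for y
    using that mult_left_mono[of c y \<sigma>] mult_left_mono[of y "c + w" \<sigma>] True
    by (simp add: distrib_left)
  then show ?thesis
    using True by (intro exI[of _ "a + \<sigma> * c"]) auto
next
  case False
  have "\<sigma> * (c + w) \<le> \<sigma> * y \<and> \<sigma> * y \<le> \<sigma> * (c + w) - \<sigma> * w" if "y \<in> {c .. c + w}" for y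
    using that mult_left_mono_neg[of y "c + w" \<sigma>] mult_left_mono_neg[of c y \<sigma>] False
    by (simp add: distrib_left)
  then show ?thesis
    using False by (intro exI[of _ "a + \<sigma> * (c + w)"]) auto
qed

lemma cyl_Cons_D:
  assumes "ls \<noteq> []" "D (hd ls) \<subseteq> {0..1}" "x \<in> cyl T D (l # ls)"
  shows "x \<in> D l" "T x \<in> cyl T D ls"
proof -
  show "x \<in> D l"
    using assms(3) unfolding cyl_def by force
  have orbit: "(T ^^ i) (T x) \<in> D (ls ! i)" if "i < length ls" for i
  proof -
    have "(T ^^ Suc i) x \<in> D ((l # ls) ! Suc i)"
      using assms(3) that unfolding cyl_def by auto
    then show ?thesis by (simp add: funpow_Suc_right del: funpow.simps)
  qed
  have "T x \<in> D (hd ls)"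
    using orbit[of 0] assms(1) by (simp add: hd_conv_nth)
  then show "T x \<in> cyl T D ls"
    using orbit assms(2) unfolding cyl_def by auto
qed

lemma cylinder_in_short_interval:
  assumes T: "lueroth_like T D" and "ls \<noteq> []" and "\<forall>l\<in>set ls. 1 \<le> l"
  shows "\<exists>c. cyl T D ls \<subseteq> {c .. c + prod_list (map digit_length ls)}"
  using assms(2,3)
proof (induction ls rule: list_nonempty_induct)
  case (single l)
  then have "cyl T D [l] \<subseteq> {1 / real (l + 1) .. 1 / real (l + 1) + digit_length l}"
    using T by (auto simp: lueroth_like_def cyl_def digit_length_telescoping)
  then show ?case by auto
next
  case (cons l ls)
  let ?P = "prod_list (map digit_length ls)"
  obtain c where c: "cyl T D ls \<subseteq> {c .. c + ?P}"
    using cons by auto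
  obtain a \<sigma> where \<sigma>: "\<bar>\<sigma>\<bar> = digit_length l" and branch: "\<forall>x\<in>D l. x = a + \<sigma> * T x"
    using T cons.prems unfolding lueroth_like_def by auto
  have "0 \<le> ?P"
    by (intro prod_list_nonneg) (auto simp: digit_length_nonneg)
  then obtain c' where c': "\<forall>y\<in>{c .. c + ?P}. a + \<sigma> * y \<in> {c' .. c' + \<bar>\<sigma>\<bar> * ?P}"
    using affine_image_interval by blast
  have "1 \<le> hd ls"
    using cons.prems cons.hyps by simp
  then have "D (hd ls) \<subseteq> {1 / real (hd ls + 1) .. 1 / real (hd ls)}"
    using T unfolding lueroth_like_def by blast
  also have "\<dots> \<subseteq> {0..1}"
    using \<open>1 \<le> hd ls\<close> by auto
  finally have D_unit: "D (hd ls) \<subseteq> {0..1}" .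
  have "x \<in> {c' .. c' + prod_list (map digit_length (l # ls))}" if x: "x \<in> cyl T D (l # ls)" for x
  proof -
    have "a + \<sigma> * T x \<in> {c' .. c' + \<bar>\<sigma>\<bar> * ?P}"
      using cyl_Cons_D(2)[OF cons.hyps D_unit x] c c' by blast
    moreover have "a + \<sigma> * T x = x"
      using cyl_Cons_D(1)[OF cons.hyps D_unit x] branch by simp
    ultimately show ?thesis
      using \<sigma> by simp
  qed
  then show ?case by blast
qed

lemma measure_sumlevel_le_visit_prob:
  assumes T: "lueroth_like T D"
  shows "measure lebesgue (sumlevel T D n) \<le> visit_prob n"
proof -
  define I where "I = {ls. ls \<noteq> [] \<and> (\<forall>l\<in>set ls. 1 \<le> l) \<and> sum_list ls = n}"
  let ?P = "\<lambda>ls. prod_list (map digit_length ls)"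
  have I_compositions: "I \<subseteq> compositions n"
    unfolding I_def compositions_def by auto
  then have "finite I"
    using finite_compositions by (rule finite_subset)
  have "\<forall>ls\<in>I. \<exists>c. cyl T D ls \<subseteq> {c .. c + ?P ls}"
    using cylinder_in_short_interval[OF T] unfolding I_def by blast
  then obtain c where c: "\<forall>ls\<in>I. cyl T D ls \<subseteq> {c ls .. c ls + ?P ls}"
    by (rule bchoice[elim_format]) blast
  define U where "U = (\<Union>ls\<in>I. {c ls .. c ls + ?P ls})"
  have "sumlevel T D n \<subseteq> U"
    unfolding sumlevel_def U_def I_def[symmetric] using c by blast
  have U: "U \<in> fmeasurable lebesgue"
    unfolding U_def using \<open>finite I\<close> by (intro fmeasurable.finite_UN) auto
  have P_nonneg: "0 \<le> ?P ls" for ls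
    by (intro prod_list_nonneg) (auto simp: digit_length_nonneg)
  have "measure lebesgue U \<le> (\<Sum>ls\<in>I. measure lebesgue {c ls .. c ls + ?P ls})"
    unfolding U_def using \<open>finite I\<close> by (intro measure_UNION_le) auto
  also have "\<dots> = (\<Sum>ls\<in>I. ?P ls)"
    using P_nonneg by simp
  also have "\<dots> \<le> visit_prob n"
    unfolding visit_prob_def using I_compositions P_nonneg
    by (intro sum_mono2 finite_compositions) auto
  finally have "measure lebesgue U \<le> visit_prob n" .
  moreover have "measure lebesgue (sumlevel T D n) \<le> measure lebesgue U"
  proof (cases "sumlevel T D n \<in> sets lebesgue")
    case True
    then show ?thesis
      using measure_mono_fmeasurable[OF \<open>sumlevel T D n \<subseteq> U\<close> _ U] by blast
  next
    case False
    then show ?thesis by (simp add: measure_notin_sets)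
  qed
  ultimately show ?thesis by linarith
qed

lemma measure_sumlevel_tendsto_zero:
  assumes "lueroth_like T D"
  shows "(\<lambda>n. measure lebesgue (sumlevel T D n)) \<longlonglongrightarrow> 0"
proof (rule real_tendsto_sandwich[OF _ _ tendsto_const
      digit_renewal.tendsto_zero[OF visit_prob_digit_renewal]])
  show "\<forall>\<^sub>F n in sequentially. measure lebesgue (sumlevel T D n) \<le> visit_prob n"
    using measure_sumlevel_le_visit_prob[OF assms] by simp
qed auto

subsection \<open>The alternating and the classical Lueroth map\<close>

lemma digit_length_mult_eq: "1 \<le> l \<Longrightarrow> digit_length l * (real l * real (l + 1)) = 1"
  by (simp add: digit_length_def)

lemma the_digit_eq:
  fixes D :: "nat \<Rightarrow> 'a set"
  assumes "x \<in> D l" "1 \<le> l"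
    and disjoint: "\<And>a b. 1 \<le> a \<Longrightarrow> a < b \<Longrightarrow> D a \<inter> D b = {}"
  shows "(THE n. 1 \<le> n \<and> x \<in> D n) = l"
proof (rule the_equality)
  fix n
  assume n: "1 \<le> n \<and> x \<in> D n"
  show "n = l"
  proof (rule linorder_cases[of n l])
    assume "n < l"
    then show ?thesis using n assms disjoint[of n l] by blast
  next
    assume "l < n"
    then show ?thesis using n assms disjoint[of l n] by blast
  qed
qed (use assms in auto)

lemma one_div_le_one_div_Suc: "a < b \<Longrightarrow> 1 / real b \<le> 1 / real (a + 1)"
  by (simp add: frac_le)

lemma harmA_disjoint: "1 \<le> a \<Longrightarrow> a < b \<Longrightarrow> harmA a \<inter> harmA b = {}"
  using one_div_le_one_div_Suc[of a b] unfolding harmA_def by auto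

lemma lurB_subset: "1 \<le> l \<Longrightarrow> lurB l \<subseteq> {1 / real (l + 1) .. 1 / real l}"
  unfolding lurB_def by auto

lemma lurB_disjoint:
  assumes "1 \<le> a" "a < b"
  shows "lurB a \<inter> lurB b = {}"
proof -
  have "x < 1 / real b" if "x \<in> lurB b" for x
    using that assms unfolding lurB_def by auto
  moreover have "1 / real (a + 1) \<le> x" if "x \<in> lurB a" for x
    using that lurB_subset[of a] assms by auto
  ultimately show ?thesis
    using one_div_le_one_div_Suc[OF assms(2)] by (fastforce simp: disjoint_iff)
qed

lemma altL_on_harmA:
  assumes "x \<in> harmA l" "1 \<le> l"
  shows "altL x = - (real l * real (l + 1)) * x + real (l + 1)"
proof -
  have "x \<noteq> 0"
    using assms unfolding harmA_def by auto
  then show ?thesis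
    unfolding altL_def using the_digit_eq[of x harmA l, OF assms harmA_disjoint] by simp
qed

lemma lurL_on_lurB:
  assumes "x \<in> lurB l" "1 \<le> l"
  shows "lurL x = real l * real (l + 1) * x - real l"
proof -
  have "x \<noteq> 0"
    using assms lurB_subset[of l] by auto
  then show ?thesis
    unfolding lurL_def using the_digit_eq[of x lurB l, OF assms lurB_disjoint] by simp
qed

lemma lueroth_like_altL: "lueroth_like altL harmA"
  unfolding lueroth_like_def
proof (intro allI impI conjI)
  fix l :: nat
  assume l: "1 \<le> l"
  show "harmA l \<subseteq> {1 / real (l + 1) .. 1 / real l}"
    unfolding harmA_def by auto
  have "1 / real l + - digit_length l * altL x = x" if "x \<in> harmA l" for x
  proof -
    have "1 / real l + - digit_length l * altL x
        = 1 / real l + digit_length l * (real l * real (l + 1)) * x - digit_length l * real (l + 1)"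
      by (simp add: altL_on_harmA[OF that l] algebra_simps)
    also have "\<dots> = x"
      using l by (simp add: digit_length_mult_eq digit_length_def)
    finally show ?thesis .
  qed
  then show "\<exists>a \<sigma>. \<bar>\<sigma>\<bar> = digit_length l \<and> (\<forall>x\<in>harmA l. x = a + \<sigma> * altL x)"
    by (intro exI[of _ "1 / real l"] exI[of _ "- digit_length l"]) (auto simp: digit_length_nonneg)
qed

lemma lueroth_like_lurL: "lueroth_like lurL lurB"
  unfolding lueroth_like_def
proof (intro allI impI conjI)
  fix l :: nat
  assume l: "1 \<le> l"
  show "lurB l \<subseteq> {1 / real (l + 1) .. 1 / real l}"
    using l by (rule lurB_subset)
  have "real l * digit_length l + digit_length l * lurL x = x" if "x \<in> lurB l" for x
  proof -
    have "real l * digit_length l + digit_length l * lurL x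
        = digit_length l * (real l * real (l + 1)) * x"
      by (simp add: lurL_on_lurB[OF that l] algebra_simps)
    also have "\<dots> = x"
      by (subst digit_length_mult_eq[OF l]) simp
    finally show ?thesis .
  qed
  then show "\<exists>a \<sigma>. \<bar>\<sigma>\<bar> = digit_length l \<and> (\<forall>x\<in>lurB l. x = a + \<sigma> * lurL x)"
    by (intro exI[of _ "real l * digit_length l"] exI[of _ "digit_length l"])
      (auto simp: digit_length_nonneg)
qed

theorem corollary5p1:
  shows "(\<lambda>n. measure lebesgue (sumlevel altL harmA n)) \<longlonglongrightarrow> 0
       \<and> (\<lambda>n. measure lebesgue (sumlevel lurL lurB n)) \<longlonglongrightarrow> 0"
  using measure_sumlevel_tendsto_zero lueroth_like_altL lueroth_like_lurL by blast

end
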